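(* Let $k$ be a field of characteristic zero and $n\geq 1$. Let $N$ be a normal subgroup of $GA_n$ containing all diagonal automorphisms of $k^n$. Then every tame automorphism of $k^n$ belongs to $N$.
   Context: $GA_n$ is the group (under composition) of polynomial automorphisms $G=(G_1,\dots,G_n)$ of $k^n$, $G_i\in k[X_1,\dots,X_n]$. An automorphism $G$ is diagonal if $G_i=c_iX_i$ with $c_i\in k\setminus\{0\}$ for all $i$; affine if $G_i=\sum_{j}a_{ij}X_j+b_i$ with $a_{ij},b_i\in k$; elementary if for some $i$, $G_i=X_i+g$ with $g\in k[X_1,\dots,X_{i-1},X_{i+1},\dots,X_n]$ and $G_j=X_j$ for $j\neq i$; tame if it is a finite composition of affine and elementary automorphisms. *)

theory Defs
  imports "HOL-Library.Poly_Mapping" "HOL-Algebra.Group"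
begin

text \<open>Multivariate polynomials over k in the variables X_0, X_1, ...:
  finitely supported maps from monomials (exponent vectors) to coefficients.\<close>
type_synonym 'a mpoly = "(nat \<Rightarrow>\<^sub>0 nat) \<Rightarrow>\<^sub>0 'a"

definition Var :: "nat \<Rightarrow> 'a::comm_ring_1 mpoly" where
  "Var i = Poly_Mapping.single (Poly_Mapping.single i 1) 1"

definition Const :: "'a::comm_ring_1 \<Rightarrow> 'a mpoly" where
  "Const c = Poly_Mapping.single 0 c"

definition vars :: "'a::zero mpoly \<Rightarrow> nat set" where
  "vars p = (\<Union>m\<in>Poly_Mapping.keys p. Poly_Mapping.keys (m :: nat \<Rightarrow>\<^sub>0 nat))"

definition subst :: "(nat \<Rightarrow> 'a::comm_ring_1 mpoly) \<Rightarrow> 'a mpoly \<Rightarrow> 'a mpoly" where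
  "subst s p = (\<Sum>m\<in>Poly_Mapping.keys p. Const (Poly_Mapping.lookup p m) * (\<Prod>i\<in>Poly_Mapping.keys m. s i ^ Poly_Mapping.lookup m i))"

text \<open>Polynomial endomorphisms of k^n: tuples (G_0,...,G_{n-1}) of polynomials in
  X_0..X_{n-1}, extended by G_i = X_i for i >= n.\<close>
definition polymaps :: "nat \<Rightarrow> (nat \<Rightarrow> 'a::comm_ring_1 mpoly) set" where
  "polymaps n = {G. (\<forall>i<n. vars (G i) \<subseteq> {..<n}) \<and> (\<forall>i\<ge>n. G i = Var i)}"

definition pcomp :: "(nat \<Rightarrow> 'a::comm_ring_1 mpoly) \<Rightarrow> (nat \<Rightarrow> 'a mpoly) \<Rightarrow> (nat \<Rightarrow> 'a mpoly)" where
  "pcomp G H = (\<lambda>i. subst H (G i))"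

definition GA_set :: "nat \<Rightarrow> (nat \<Rightarrow> 'a::comm_ring_1 mpoly) set" where
  "GA_set n = {G \<in> polymaps n. \<exists>H \<in> polymaps n. pcomp G H = Var \<and> pcomp H G = Var}"

definition GA :: "nat \<Rightarrow> (nat \<Rightarrow> 'a::comm_ring_1 mpoly) monoid" where
  "GA n = \<lparr>carrier = GA_set n, mult = pcomp, one = Var\<rparr>"

definition diagonal :: "nat \<Rightarrow> (nat \<Rightarrow> 'a::field mpoly) \<Rightarrow> bool" where
  "diagonal n G \<longleftrightarrow> G \<in> polymaps n \<and>
     (\<exists>c. \<forall>i<n. c i \<noteq> 0 \<and> G i = Const (c i) * Var i)"

definition affine :: "nat \<Rightarrow> (nat \<Rightarrow> 'a::field mpoly) \<Rightarrow> bool" where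
  "affine n G \<longleftrightarrow> G \<in> polymaps n \<and>
     (\<exists>a b. \<forall>i<n. G i = (\<Sum>j<n. Const (a i j) * Var j) + Const (b i))"

definition elementary :: "nat \<Rightarrow> (nat \<Rightarrow> 'a::field mpoly) \<Rightarrow> bool" where
  "elementary n G \<longleftrightarrow> G \<in> polymaps n \<and>
     (\<exists>i<n. \<exists>g. vars g \<subseteq> {..<n} - {i} \<and> G i = Var i + g \<and> (\<forall>j<n. j \<noteq> i \<longrightarrow> G j = Var j))"

inductive tame :: "nat \<Rightarrow> (nat \<Rightarrow> 'a::field mpoly) \<Rightarrow> bool" for n where
  tame_affine: "affine n G \<Longrightarrow> G \<in> GA_set n \<Longrightarrow> tame n G"
| tame_elementary: "elementary n G \<Longrightarrow> tame n G"
| tame_comp: "tame n G \<Longrightarrow> tame n H \<Longrightarrow> tame n (pcomp G H)"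

end

theory Submission
  imports Defs "HOL-Algebra.Coset" Jordan_Normal_Form.Determinant
begin

text \<open>An elementary map E = (X_i + g) is conjugated to E \<circ> E by the dilation D of X_i by 2
  (g does not involve X_i), hence E = D (E D^-1 E^-1) lies in the normal subgroup N;
  characteristic zero is used only for 2 \<noteq> 0. The same trick with D = 2 id puts all
  translations into N. An affine automorphism is a translation after a linear automorphism, and
  row reduction writes every invertible matrix as a product of diagonal matrices and
  elementary transvections, whose linear maps are diagonal or elementary.\<close>

section \<open>Substitution of polynomials\<close>

definition monomial_value :: "(nat \<Rightarrow> 'a::comm_ring_1 mpoly) \<Rightarrow> (nat \<Rightarrow>\<^sub>0 nat) \<Rightarrow> 'a mpoly" where
  "monomial_value s m = (\<Prod>i\<in>Poly_Mapping.keys m. s i ^ Poly_Mapping.lookup m i)"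

lemma subst_eq_sum_monomial_value:
  "subst s p = (\<Sum>m\<in>Poly_Mapping.keys p. Const (Poly_Mapping.lookup p m) * monomial_value s m)"
  by (simp add: subst_def monomial_value_def)

lemma Const_0 [simp]: "Const 0 = 0"
  and Const_1 [simp]: "Const 1 = 1"
  and Const_add: "Const (a + b) = Const a + Const b"
  and Const_mult: "Const (a * b) = Const a * Const b"
  by (simp_all add: Const_def single_add mult_single)

lemma Const_sum: "Const (sum f A) = (\<Sum>x\<in>A. Const (f x))"
  by (induct A rule: infinite_finite_induct) (auto simp: Const_add)

lemma lookup_Const_mult: "Poly_Mapping.lookup (Const c * p) m = c * Poly_Mapping.lookup p m"
  by (simp add: Const_def mult_map_scale_conv_mult[symmetric] map.rep_eq when_def)

lemma monomial_value_superset: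
  "finite S \<Longrightarrow> Poly_Mapping.keys m \<subseteq> S \<Longrightarrow> monomial_value s m = (\<Prod>i\<in>S. s i ^ Poly_Mapping.lookup m i)"
  unfolding monomial_value_def by (rule prod.mono_neutral_left) (auto simp: in_keys_iff)

lemma subst_superset:
  "finite S \<Longrightarrow> Poly_Mapping.keys p \<subseteq> S \<Longrightarrow> subst s p = (\<Sum>m\<in>S. Const (Poly_Mapping.lookup p m) * monomial_value s m)"
  unfolding subst_eq_sum_monomial_value by (rule sum.mono_neutral_left) (auto simp: in_keys_iff)

lemma monomial_value_add: "monomial_value s (a + b) = monomial_value s a * monomial_value s b"
proof -
  let ?S = "Poly_Mapping.keys a \<union> Poly_Mapping.keys b"
  have "monomial_value s (a + b) = (\<Prod>i\<in>?S. s i ^ Poly_Mapping.lookup (a + b) i)"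
    by (rule monomial_value_superset) (auto simp: in_keys_iff lookup_add)
  also have "\<dots> = (\<Prod>i\<in>?S. s i ^ Poly_Mapping.lookup a i) * (\<Prod>i\<in>?S. s i ^ Poly_Mapping.lookup b i)"
    by (simp add: lookup_add power_add prod.distrib)
  also have "\<dots> = monomial_value s a * monomial_value s b"
    using monomial_value_superset[of ?S a s] monomial_value_superset[of ?S b s] by simp
  finally show ?thesis .
qed

lemma subst_zero [simp]: "subst s 0 = 0"
  by (simp add: subst_def)

lemma subst_add: "subst s (p + q) = subst s p + subst s q"
proof -
  let ?S = "Poly_Mapping.keys p \<union> Poly_Mapping.keys q"
  have "subst s (p + q) = (\<Sum>m\<in>?S. Const (Poly_Mapping.lookup (p + q) m) * monomial_value s m)"
    using keys_add[of p q] by (intro subst_superset) auto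
  also have "\<dots> = (\<Sum>m\<in>?S. Const (Poly_Mapping.lookup p m) * monomial_value s m)
                 + (\<Sum>m\<in>?S. Const (Poly_Mapping.lookup q m) * monomial_value s m)"
    by (simp only: lookup_add Const_add distrib_right sum.distrib)
  also have "\<dots> = subst s p + subst s q"
    using subst_superset[of ?S p s] subst_superset[of ?S q s] by simp
  finally show ?thesis .
qed

lemma subst_sum: "subst s (sum f A) = (\<Sum>x\<in>A. subst s (f x))"
  by (induct A rule: infinite_finite_induct) (auto simp: subst_add)

lemma poly_mapping_sum_single: "p = (\<Sum>m\<in>Poly_Mapping.keys p. Poly_Mapping.single m (Poly_Mapping.lookup p m))"
  by (rule poly_mapping_eqI) (simp add: lookup_sum lookup_single when_def in_keys_iff)

lemma subst_single: "subst s (Poly_Mapping.single m c) = Const c * monomial_value s m"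
  by (cases "c = 0") (simp_all add: subst_eq_sum_monomial_value)

lemma subst_mult: "subst s (p * q) = subst s p * subst s q"
proof -
  let ?P = "Poly_Mapping.keys p" and ?Q = "Poly_Mapping.keys q"
  have "p * q = (\<Sum>a\<in>?P. Poly_Mapping.single a (Poly_Mapping.lookup p a))
              * (\<Sum>b\<in>?Q. Poly_Mapping.single b (Poly_Mapping.lookup q b))"
    by (simp only: poly_mapping_sum_single[symmetric])
  also have "\<dots> = (\<Sum>a\<in>?P. \<Sum>b\<in>?Q.
      Poly_Mapping.single (a + b) (Poly_Mapping.lookup p a * Poly_Mapping.lookup q b))"
    by (simp add: sum_product mult_single)
  finally have "subst s (p * q) = (\<Sum>a\<in>?P. \<Sum>b\<in>?Q.
      Const (Poly_Mapping.lookup p a * Poly_Mapping.lookup q b) * monomial_value s (a + b))"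
    by (simp only: subst_sum subst_single)
  also have "\<dots> = (\<Sum>a\<in>?P. \<Sum>b\<in>?Q. (Const (Poly_Mapping.lookup p a) * monomial_value s a)
      * (Const (Poly_Mapping.lookup q b) * monomial_value s b))"
    by (simp only: Const_mult monomial_value_add mult.assoc mult.left_commute)
  also have "\<dots> = subst s p * subst s q"
    by (simp only: subst_eq_sum_monomial_value[of s p] subst_eq_sum_monomial_value[of s q] sum_product)
  finally show ?thesis .
qed

lemma subst_Const [simp]: "subst s (Const c) = Const c"
  by (simp add: Const_def subst_single monomial_value_def)

lemma subst_one [simp]: "subst s 1 = 1"
  using subst_Const[of s 1] by simp

lemma subst_Var [simp]: "subst s (Var i) = s i"
  by (simp add: Var_def subst_single monomial_value_def)

lemma subst_prod: "subst s (prod f A) = (\<Prod>x\<in>A. subst s (f x))"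
  by (induct A rule: infinite_finite_induct) (auto simp: subst_mult)

lemma subst_power: "subst s (p ^ k) = subst s p ^ k"
  by (induct k) (auto simp: subst_mult)

lemma Var_power: "(Var i :: 'a::comm_ring_1 mpoly) ^ k = Poly_Mapping.single (Poly_Mapping.single i k) 1"
  by (induct k) (auto simp: Var_def mult_single single_add[symmetric] add.commute)

lemma monomial_value_Var: "monomial_value Var m = (Poly_Mapping.single m 1 :: 'a::comm_ring_1 mpoly)"
proof -
  have "(\<Prod>i\<in>A. Poly_Mapping.single (f i) (1::'a)) = Poly_Mapping.single (sum f A) 1" for A and f :: "nat \<Rightarrow> nat \<Rightarrow>\<^sub>0 nat"
    by (induct A rule: infinite_finite_induct) (auto simp: mult_single)
  then show ?thesis
    unfolding monomial_value_def Var_power using poly_mapping_sum_single[of m] by simp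
qed

lemma subst_Var_right [simp]: "subst Var p = p"
  unfolding subst_eq_sum_monomial_value monomial_value_Var
  by (subst (2) poly_mapping_sum_single) (simp add: Const_def mult_single)

lemma subst_subst: "subst s (subst t p) = subst (\<lambda>i. subst s (t i)) p"
  by (simp add: subst_eq_sum_monomial_value[of t p] subst_eq_sum_monomial_value[of _ p]
      subst_sum subst_mult monomial_value_def subst_prod subst_power)

lemma subst_cong:
  assumes "\<And>i. i \<in> vars p \<Longrightarrow> s i = t i"
  shows "subst s p = subst t p"
  unfolding subst_eq_sum_monomial_value monomial_value_def
proof (intro sum.cong refl arg_cong2[where f = "(*)"] prod.cong)
  fix m i assume "m \<in> Poly_Mapping.keys p" "i \<in> Poly_Mapping.keys m"
  then have "i \<in> vars p"
    unfolding vars_def by blast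
  then show "s i ^ Poly_Mapping.lookup m i = t i ^ Poly_Mapping.lookup m i"
    using assms by simp
qed

lemma subst_eq_self: "(\<And>i. i \<in> vars p \<Longrightarrow> s i = Var i) \<Longrightarrow> subst s p = p"
  using subst_cong[of p s Var] by simp

lemma vars_add: "vars (p + q) \<subseteq> vars p \<union> vars q"
  unfolding vars_def using keys_add[of p q] by blast

lemma vars_mult: "vars (p * q) \<subseteq> vars p \<union> vars q"
proof
  fix i assume "i \<in> vars (p * q)"
  then obtain m where m: "m \<in> Poly_Mapping.keys (p * q)" and i: "i \<in> Poly_Mapping.keys m"
    unfolding vars_def by blast
  from keys_mult m obtain a b where "m = a + b" "a \<in> Poly_Mapping.keys p" "b \<in> Poly_Mapping.keys q"
    by blast
  moreover have "Poly_Mapping.keys (a + b) \<subseteq> Poly_Mapping.keys a \<union> Poly_Mapping.keys b"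
    by (rule keys_add)
  ultimately show "i \<in> vars p \<union> vars q"
    using i unfolding vars_def by blast
qed

lemma vars_Const [simp]: "vars (Const c) = {}"
  by (simp add: vars_def Const_def)

lemma vars_Var [simp]: "vars (Var i :: 'a::comm_ring_1 mpoly) = {i}"
  by (simp add: vars_def Var_def)

lemma vars_uminus [simp]: "vars (- p) = vars p"
  by (simp add: vars_def)

lemma vars_Const_mult: "vars (Const c * p) \<subseteq> vars p"
  using vars_mult[of "Const c" p] by simp

lemma vars_one [simp]: "vars (1 :: 'a::comm_ring_1 mpoly) = {}"
  using vars_Const[of 1] by simp

lemma vars_sum: "vars (sum f A) \<subseteq> (\<Union>x\<in>A. vars (f x))"
proof (induct A rule: infinite_finite_induct)
  case (insert x F)
  then show ?case
    using vars_add[of "f x" "sum f F"] by auto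
qed (auto simp: vars_def)

lemma vars_prod: "vars (prod f A :: 'a::comm_ring_1 mpoly) \<subseteq> (\<Union>x\<in>A. vars (f x))"
proof (induct A rule: infinite_finite_induct)
  case (insert x F)
  then show ?case
    using vars_mult[of "f x" "prod f F"] by auto
qed auto

lemma vars_power: "vars ((p :: 'a::comm_ring_1 mpoly) ^ k) \<subseteq> vars p"
proof (induct k)
  case (Suc k)
  then show ?case
    using vars_mult[of p "p ^ k"] by auto
qed auto

lemma vars_subst: "vars (subst s p) \<subseteq> (\<Union>i\<in>vars p. vars (s i))"
  unfolding subst_eq_sum_monomial_value
proof (rule order_trans[OF vars_sum], rule UN_least)
  fix m assume m: "m \<in> Poly_Mapping.keys p"
  have "vars (Const (Poly_Mapping.lookup p m) * monomial_value s m) \<subseteq> vars (monomial_value s m)"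
    by (rule vars_Const_mult)
  also have "\<dots> \<subseteq> (\<Union>i\<in>Poly_Mapping.keys m. vars (s i ^ Poly_Mapping.lookup m i))"
    unfolding monomial_value_def by (rule vars_prod)
  also have "\<dots> \<subseteq> (\<Union>i\<in>Poly_Mapping.keys m. vars (s i))"
    by (rule UN_mono[OF subset_refl vars_power])
  also have "\<dots> \<subseteq> (\<Union>i\<in>vars p. vars (s i))"
    by (rule UN_mono[OF _ subset_refl]) (use m in \<open>auto simp: vars_def\<close>)
  finally show "vars (Const (Poly_Mapping.lookup p m) * monomial_value s m)
      \<subseteq> (\<Union>i\<in>vars p. vars (s i))" .
qed

section \<open>The group GA_n\<close>

lemma pcomp_assoc: "pcomp (pcomp F G) H = pcomp F (pcomp G H)"
  by (simp add: pcomp_def subst_subst)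

lemma pcomp_Var_left [simp]: "pcomp Var G = G"
  by (simp add: pcomp_def)

lemma pcomp_Var_right [simp]: "pcomp G Var = G"
  by (simp add: pcomp_def)

lemma Var_in_polymaps: "Var \<in> polymaps n"
  by (simp add: polymaps_def)

lemma pcomp_in_polymaps:
  assumes G: "G \<in> polymaps n" and H: "H \<in> polymaps n"
  shows "pcomp G H \<in> polymaps n"
  unfolding polymaps_def mem_Collect_eq
proof (intro conjI allI impI)
  fix i assume "i < n"
  have "vars (pcomp G H i) \<subseteq> (\<Union>j\<in>vars (G i). vars (H j))"
    unfolding pcomp_def by (rule vars_subst)
  also have "\<dots> \<subseteq> {..<n}"
    using G H \<open>i < n\<close> unfolding polymaps_def by fastforce
  finally show "vars (pcomp G H i) \<subseteq> {..<n}" .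
next
  fix i assume "n \<le> i"
  then show "pcomp G H i = Var i"
    using G H unfolding polymaps_def pcomp_def by simp
qed

lemma GA_setI:
  "G \<in> polymaps n \<Longrightarrow> H \<in> polymaps n \<Longrightarrow> pcomp G H = Var \<Longrightarrow> pcomp H G = Var \<Longrightarrow> G \<in> GA_set n"
  unfolding GA_set_def by blast

lemma carrier_GA [simp]: "carrier (GA n) = GA_set n"
  and mult_GA [simp]: "x \<otimes>\<^bsub>GA n\<^esub> y = pcomp x y"
  and one_GA [simp]: "\<one>\<^bsub>GA n\<^esub> = Var"
  by (simp_all add: GA_def)

lemma group_GA: "group (GA n :: (nat \<Rightarrow> 'a::comm_ring_1 mpoly) monoid)"
proof (rule groupI)
  fix G H :: "nat \<Rightarrow> 'a mpoly"
  assume "G \<in> carrier (GA n)" "H \<in> carrier (GA n)"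
  then obtain G' H' where G: "G \<in> polymaps n" "G' \<in> polymaps n" "pcomp G G' = Var" "pcomp G' G = Var"
    and H: "H \<in> polymaps n" "H' \<in> polymaps n" "pcomp H H' = Var" "pcomp H' H = Var"
    by (auto simp: GA_set_def)
  have "pcomp (pcomp G H) (pcomp H' G') = Var" "pcomp (pcomp H' G') (pcomp G H) = Var"
    by (simp_all add: pcomp_assoc flip: pcomp_assoc[of H H'] pcomp_assoc[of G' G] add: G H)
  with G H show "G \<otimes>\<^bsub>GA n\<^esub> H \<in> carrier (GA n)"
    by (auto intro: GA_setI pcomp_in_polymaps)
next
  fix G assume "G \<in> carrier (GA n)"
  then obtain G' where "G \<in> polymaps n" "G' \<in> polymaps n" "pcomp G G' = Var" "pcomp G' G = Var"
    by (auto simp: GA_set_def)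
  then show "\<exists>H\<in>carrier (GA n). H \<otimes>\<^bsub>GA n\<^esub> G = \<one>\<^bsub>GA n\<^esub>"
    by (auto intro: GA_setI)
qed (auto simp: pcomp_assoc intro: GA_setI Var_in_polymaps)

lemma inv_GA_eq:
  assumes "G \<in> GA_set n" "H \<in> polymaps n" "pcomp G H = Var" "pcomp H G = Var"
  shows "inv\<^bsub>GA n\<^esub> G = H"
  by (rule group.inv_equality[OF group_GA]) (use assms in \<open>auto simp: GA_set_def\<close>)

section \<open>Linear maps, translations and elementary maps\<close>

definition lin :: "nat \<Rightarrow> 'a::comm_ring_1 mat \<Rightarrow> nat \<Rightarrow> 'a mpoly" where
  "lin n M = (\<lambda>i. if i < n then (\<Sum>j<n. Const (M $$ (i, j)) * Var j) else Var i)"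

lemma lin_in_polymaps: "lin n M \<in> polymaps n"
  unfolding polymaps_def mem_Collect_eq
proof (intro conjI allI impI)
  fix i assume "i < n"
  have "vars (lin n M i) \<subseteq> (\<Union>j<n. vars (Const (M $$ (i, j)) * Var j))"
    unfolding lin_def using \<open>i < n\<close> by (simp add: vars_sum)
  also have "\<dots> \<subseteq> {..<n}"
    using vars_Const_mult[of _ "Var _"] by fastforce
  finally show "vars (lin n M i) \<subseteq> {..<n}" .
qed (simp add: lin_def)

lemma pcomp_lin:
  assumes A: "A \<in> carrier_mat n n" and B: "B \<in> carrier_mat n n"
  shows "pcomp (lin n A) (lin n B) = lin n (A * B)"
proof
  fix i show "pcomp (lin n A) (lin n B) i = lin n (A * B) i"
  proof (cases "i < n")
    case True
    have "pcomp (lin n A) (lin n B) i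
        = (\<Sum>j<n. Const (A $$ (i, j)) * (\<Sum>k<n. Const (B $$ (j, k)) * Var k))"
      using True by (simp add: pcomp_def lin_def subst_sum subst_mult)
    also have "\<dots> = (\<Sum>k<n. \<Sum>j<n. Const (A $$ (i, j)) * (Const (B $$ (j, k)) * Var k))"
      by (simp only: sum_distrib_left) (rule sum.swap)
    also have "\<dots> = (\<Sum>k<n. Const (\<Sum>j<n. A $$ (i, j) * B $$ (j, k)) * Var k)"
      by (simp only: Const_sum Const_mult sum_distrib_right mult.assoc)
    also have "\<dots> = lin n (A * B) i"
      using True A B by (auto simp: lin_def scalar_prod_def atLeast0LessThan intro!: sum.cong)
    finally show ?thesis .
  qed (simp add: pcomp_def lin_def)
qed

lemma sum_Const_mult_Var_single:
  assumes "i < n" "\<And>j. j < n \<Longrightarrow> j \<noteq> i \<Longrightarrow> f j = 0"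
  shows "(\<Sum>j<n. Const (f j) * Var j) = (Const (f i) * Var i :: 'a::comm_ring_1 mpoly)"
  using assms by (subst sum.remove[of _ i]) (auto intro: sum.neutral)

lemma lin_diagonal_apply:
  assumes "i < n" "\<And>j. j < n \<Longrightarrow> j \<noteq> i \<Longrightarrow> M $$ (i, j) = 0"
  shows "lin n M i = Const (M $$ (i, i)) * Var i"
  using sum_Const_mult_Var_single[of i n "\<lambda>j. M $$ (i, j)"] assms by (simp add: lin_def)

lemma lin_one [simp]: "lin n (1\<^sub>m n) = Var"
proof
  fix i show "lin n (1\<^sub>m n) i = Var i"
    by (cases "i < n") (simp_all add: lin_diagonal_apply, simp add: lin_def)
qed

lemma inv_lin:
  assumes A: "A \<in> carrier_mat n n" and B: "B \<in> carrier_mat n n" and AB: "A * B = 1\<^sub>m n"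
  shows "lin n A \<in> GA_set n" "inv\<^bsub>GA n\<^esub> (lin n A) = lin n (B :: 'a::field mat)"
proof -
  have BA: "B * A = 1\<^sub>m n"
    by (rule mat_mult_left_right_inverse[OF A B AB])
  show "lin n A \<in> GA_set n"
    by (rule GA_setI[OF lin_in_polymaps lin_in_polymaps[of n B]]) (simp_all add: pcomp_lin A B AB BA)
  then show "inv\<^bsub>GA n\<^esub> (lin n A) = lin n B"
    by (rule inv_GA_eq[OF _ lin_in_polymaps]) (simp_all add: pcomp_lin A B AB BA)
qed

lemma diagonal_lin:
  assumes "M \<in> carrier_mat n n" "\<And>i j. i < n \<Longrightarrow> j < n \<Longrightarrow> i \<noteq> j \<Longrightarrow> M $$ (i, j) = 0"
    and "\<And>i. i < n \<Longrightarrow> M $$ (i, i) \<noteq> 0"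
  shows "diagonal n (lin n (M :: 'a::field mat))"
  unfolding diagonal_def
proof (intro conjI lin_in_polymaps exI[of _ "\<lambda>i. M $$ (i, i)"] allI impI)
  fix i assume "i < n"
  with assms show "M $$ (i, i) \<noteq> 0" "lin n M i = Const (M $$ (i, i)) * Var i"
    by (auto intro: lin_diagonal_apply)
qed

lemma lin_multrow_mat_apply:
  "i < n \<Longrightarrow> lin n (multrow_mat n k c) i = Const (if i = k then c else 1) * Var i"
  by (subst lin_diagonal_apply) auto

lemma lin_scalar_apply: "i < n \<Longrightarrow> lin n (c \<cdot>\<^sub>m 1\<^sub>m n) i = Const c * Var i"
  by (subst lin_diagonal_apply) auto

definition translation :: "nat \<Rightarrow> (nat \<Rightarrow> 'a::comm_ring_1) \<Rightarrow> nat \<Rightarrow> 'a mpoly" where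
  "translation n b = (\<lambda>i. if i < n then Var i + Const (b i) else Var i)"

lemma translation_in_polymaps: "translation n b \<in> polymaps n"
  unfolding polymaps_def translation_def using vars_add[of "Var _" "Const _"] by auto

lemma pcomp_translation:
  "pcomp (translation n b) (translation n c) = translation n (\<lambda>i. b i + c i)"
  by (auto simp: pcomp_def translation_def subst_add Const_add add_ac)

lemma translation_zero [simp]: "translation n (\<lambda>_. 0) = Var"
  by (auto simp: translation_def)

lemma translation_in_GA: "translation n b \<in> GA_set n"
  by (rule GA_setI[OF translation_in_polymaps translation_in_polymaps[of n "\<lambda>i. - b i"]])
     (simp_all add: pcomp_translation)

definition elementary_map :: "nat \<Rightarrow> 'a::comm_ring_1 mpoly \<Rightarrow> nat \<Rightarrow> 'a mpoly" where
  "elementary_map i g = Var(i := Var i + g)"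

lemma elementary_map_in_polymaps:
  assumes "i < n" "vars g \<subseteq> {..<n} - {i}"
  shows "elementary_map i g \<in> polymaps n"
  using assms vars_add[of "Var i" g] by (auto simp: polymaps_def elementary_map_def)

lemma pcomp_elementary_map:
  assumes "i \<notin> vars g"
  shows "pcomp (elementary_map i g) (elementary_map i h) = elementary_map i (g + h)"
proof -
  have "subst (elementary_map i h) g = g"
    using assms by (intro subst_eq_self) (auto simp: elementary_map_def)
  then show ?thesis
    by (auto simp: pcomp_def elementary_map_def subst_add add_ac)
qed

lemma elementary_map_zero [simp]: "elementary_map i 0 = Var"
  by (simp add: elementary_map_def)

lemma elementary_map_in_GA:
  assumes "i < n" "vars g \<subseteq> {..<n} - {i}"
  shows "elementary_map i g \<in> GA_set n"
proof (rule GA_setI)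
  show "elementary_map i g \<in> polymaps n" "elementary_map i (- g) \<in> polymaps n"
    using assms by (simp_all add: elementary_map_in_polymaps)
  show "pcomp (elementary_map i g) (elementary_map i (- g)) = Var"
    "pcomp (elementary_map i (- g)) (elementary_map i g) = Var"
    using assms by (simp_all add: pcomp_elementary_map subset_Diff_insert)
qed

lemma elementary_eq_elementary_map:
  assumes "elementary n G"
  obtains i g where "i < n" "vars g \<subseteq> {..<n} - {i}" "G = elementary_map i g"
proof -
  from assms obtain i g where i: "i < n" "vars g \<subseteq> {..<n} - {i}" and Gi: "G i = Var i + g"
    and Gj: "\<forall>j<n. j \<noteq> i \<longrightarrow> G j = Var j" and G: "G \<in> polymaps n"
    unfolding elementary_def by blast
  have "G = elementary_map i g"
  proof
    fix j show "G j = elementary_map i g j"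
      using i Gi Gj G by (cases "j < n") (auto simp: elementary_map_def polymaps_def)
  qed
  with i show thesis
    using that by blast
qed

lemma lin_addrow_mat:
  assumes "k < n" "l < n" "k \<noteq> l"
  shows "lin n (addrow_mat n a k l) = elementary_map k (Const a * Var l)"
proof
  fix i show "lin n (addrow_mat n a k l) i = elementary_map k (Const a * Var l) i"
  proof (cases "i < n \<and> i = k")
    case True
    have "(\<Sum>j<n. Const (addrow_mat n a k l $$ (i, j)) * Var j)
        = (\<Sum>j<n. Const (of_bool (j = k)) * Var j + Const (if j = l then a else 0) * Var j)"
      using assms True by (intro sum.cong) (auto simp: Const_add distrib_right)
    also have "\<dots> = Var k + Const a * Var l"
      using assms
      by (simp add: sum.distrib sum_Const_mult_Var_single[of k] sum_Const_mult_Var_single[of l])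
    finally show ?thesis
      using True by (simp add: lin_def elementary_map_def)
  next
    case False
    show ?thesis
    proof (cases "i < n")
      case True
      with False assms have "lin n (addrow_mat n a k l) i = Const (addrow_mat n a k l $$ (i, i)) * Var i"
        by (intro lin_diagonal_apply) auto
      with True False show ?thesis
        by (simp add: elementary_map_def)
    qed (use assms in \<open>simp add: lin_def elementary_map_def\<close>)
  qed
qed

lemma conj_elementary_map_multrow:
  assumes i: "i < n" and g: "vars g \<subseteq> {..<n} - {i}" and c: "(c :: 'a::field) \<noteq> 0"
  shows "pcomp (pcomp (lin n (multrow_mat n i c)) (elementary_map i g)) (lin n (multrow_mat n i (inverse c)))
    = elementary_map i (Const c * g)"
proof
  fix j
  have g_fixed: "subst (lin n (multrow_mat n i (inverse c))) g = g"
  proof (rule subst_eq_self)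
    fix k assume "k \<in> vars g"
    with g have "k < n" "k \<noteq> i"
      by auto
    then show "lin n (multrow_mat n i (inverse c)) k = Var k"
      by (simp add: lin_multrow_mat_apply)
  qed
  show "pcomp (pcomp (lin n (multrow_mat n i c)) (elementary_map i g)) (lin n (multrow_mat n i (inverse c))) j
    = elementary_map i (Const c * g) j"
  proof (cases "j < n")
    case True
    then show ?thesis
      using i c g_fixed
      by (auto simp: pcomp_def lin_multrow_mat_apply elementary_map_def subst_add subst_mult
          distrib_left Const_mult[symmetric] mult.assoc[symmetric])
  qed (use i in \<open>simp add: pcomp_def lin_def elementary_map_def\<close>)
qed

lemma conj_translation_scalar:
  assumes c: "(c :: 'a::field) \<noteq> 0"
  shows "pcomp (pcomp (lin n (c \<cdot>\<^sub>m 1\<^sub>m n)) (translation n b)) (lin n (inverse c \<cdot>\<^sub>m 1\<^sub>m n))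
    = translation n (\<lambda>i. c * b i)"
proof
  fix i show "pcomp (pcomp (lin n (c \<cdot>\<^sub>m 1\<^sub>m n)) (translation n b)) (lin n (inverse c \<cdot>\<^sub>m 1\<^sub>m n)) i
    = translation n (\<lambda>i. c * b i) i"
    using c by (cases "i < n") (auto simp: pcomp_def lin_scalar_apply translation_def subst_add subst_mult
        distrib_left Const_mult[symmetric] mult.assoc[symmetric], simp_all add: lin_def)
qed

lemma affine_eq_pcomp_translation_lin:
  assumes "affine n G"
  obtains M b where "M \<in> carrier_mat n n" "G = pcomp (translation n b) (lin n M)"
proof -
  from assms obtain a b where G: "G \<in> polymaps n"
    and Gi: "\<forall>i<n. G i = (\<Sum>j<n. Const (a i j) * Var j) + Const (b i)"
    unfolding affine_def by blast
  define M where "M = mat n n (\<lambda>(i, j). a i j)"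
  have "G = pcomp (translation n b) (lin n M)"
  proof
    fix i show "G i = pcomp (translation n b) (lin n M) i"
      using G Gi by (cases "i < n") (auto simp: pcomp_def translation_def subst_add lin_def M_def polymaps_def)
  qed
  then show thesis
    using that[of M b] by (simp add: M_def)
qed

lemma det_nonzero_if_lin_in_GA:
  assumes M: "M \<in> carrier_mat n n" and L: "lin n M \<in> GA_set n"
  shows "det (M :: 'a::field mat) \<noteq> 0"
proof -
  from L obtain H where LH: "pcomp (lin n M) H = Var"
    unfolding GA_set_def by blast
  have H: "(\<Sum>j<n. Const (M $$ (i, j)) * H j) = Var i" if "i < n" for i
    using fun_cong[OF LH, of i] that by (simp add: pcomp_def lin_def subst_sum subst_mult)
  \<comment> \<open>the linear coefficients of the inverse form the inverse matrix\<close>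
  define M' where "M' = mat n n (\<lambda>(j, k). Poly_Mapping.lookup (H j) (Poly_Mapping.single k 1))"
  have "M * M' = 1\<^sub>m n"
  proof (rule eq_matI)
    fix i k assume "i < dim_row (1\<^sub>m n :: 'a mat)" "k < dim_col (1\<^sub>m n :: 'a mat)"
    then have i: "i < n" and k: "k < n"
      by auto
    have "(M * M') $$ (i, k) = Poly_Mapping.lookup (\<Sum>j<n. Const (M $$ (i, j)) * H j) (Poly_Mapping.single k 1)"
      using M i k by (auto simp: M'_def scalar_prod_def lookup_sum lookup_Const_mult atLeast0LessThan intro!: sum.cong)
    also have "\<dots> = (1\<^sub>m n :: 'a mat) $$ (i, k)"
    proof -
      have "Poly_Mapping.single i (1 :: nat) = Poly_Mapping.single k 1 \<longleftrightarrow> i = k"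
        by (metis lookup_single_eq lookup_single_not_eq one_neq_zero)
      then show ?thesis
        using i k by (simp add: H Var_def lookup_single when_def)
    qed
    finally show "(M * M') $$ (i, k) = (1\<^sub>m n :: 'a mat) $$ (i, k)" .
  qed (use M in \<open>auto simp: M'_def\<close>)
  then have "det M * det M' = 1"
    using det_mult[OF M, of M'] by (simp add: M'_def)
  then show ?thesis
    by auto
qed

section \<open>Row reduction\<close>

definition unit_columns :: "nat \<Rightarrow> 'a::zero_neq_one mat \<Rightarrow> bool" where
  "unit_columns k A \<longleftrightarrow> (\<forall>i<dim_row A. \<forall>j<k. A $$ (i, j) = (if i = j then 1 else 0))"

lemma unit_columns_dim_imp_one:
  "A \<in> carrier_mat n n \<Longrightarrow> unit_columns n A \<Longrightarrow> A = 1\<^sub>m n"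
  by (intro eq_matI) (auto simp: unit_columns_def)

lemma unit_columns_pivot_exists:
  fixes A :: "'a::field mat"
  assumes A: "A \<in> carrier_mat n n" and det: "det A \<noteq> 0"
    and cols: "unit_columns k A" and k: "k < n"
  shows "\<exists>i. k \<le> i \<and> i < n \<and> A $$ (i, k) \<noteq> 0"
proof (rule ccontr)
  assume "\<nexists>i. k \<le> i \<and> i < n \<and> A $$ (i, k) \<noteq> 0"
  then have zero: "A $$ (i, k) = 0" if "k \<le> i" "i < n" for i
    using that by blast
  define v where "v = vec n (\<lambda>j. if j = k then 1 else if j < k then - A $$ (j, k) else 0)"
  \<comment> \<open>column k is a combination of the unit columns before it, so v lies in the kernel\<close>
  have "A *\<^sub>v v = 0\<^sub>v n"
  proof (rule eq_vecI)
    fix i assume "i < dim_vec (0\<^sub>v n :: 'a vec)"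
    then have i: "i < n" by simp
    let ?t = "\<lambda>j. (if j = k then A $$ (i, k) else 0) + (if j = i \<and> i < k then - A $$ (i, k) else 0)"
    have "A $$ (i, j) * v $ j = ?t j" if "j < n" for j
      using that i cols A k by (auto simp: v_def unit_columns_def)
    then have "(A *\<^sub>v v) $ i = (\<Sum>j<n. ?t j)"
      using A i by (auto simp: scalar_prod_def v_def atLeast0LessThan intro!: sum.cong)
    also have "\<dots> = 0"
      using i k zero[of i] by (cases "i < k") (simp_all add: sum.distrib)
    finally show "(A *\<^sub>v v) $ i = 0\<^sub>v n $ i"
      using i by simp
  qed (use A in simp)
  moreover have "v \<in> carrier_vec n" "v \<noteq> 0\<^sub>v n"
    using k by (auto simp: v_def dest!: arg_cong[where f = "\<lambda>w. w $ k"])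
  ultimately show False
    using det det_0_iff_vec_prod_zero[OF A] by blast
qed

locale row_operation_closed =
  fixes n :: nat and P :: "'a::field mat \<Rightarrow> bool"
  assumes P_one: "P (1\<^sub>m n)"
    and P_multrow_mat:
      "\<And>k c B. k < n \<Longrightarrow> c \<noteq> 0 \<Longrightarrow> B \<in> carrier_mat n n \<Longrightarrow> P B \<Longrightarrow> P (multrow_mat n k c * B)"
    and P_addrow_mat:
      "\<And>k l a B. k < n \<Longrightarrow> l < n \<Longrightarrow> k \<noteq> l \<Longrightarrow> B \<in> carrier_mat n n \<Longrightarrow> P B
        \<Longrightarrow> P (addrow_mat n a k l * B)"
begin

lemma P_multrow_rev:
  assumes k: "k < n" and c: "c \<noteq> 0" and A: "A \<in> carrier_mat n n" and P: "P (multrow k c A)"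
  shows "P A"
proof -
  have "multrow_mat n k (inverse c) * multrow k c A
      = (multrow_mat n k (inverse c) * multrow_mat n k c) * A"
    using A by (simp add: multrow_mat[OF A] assoc_mult_mat[of _ n n _ n A n])
  also have "\<dots> = A"
    using multrow_mat_inv[of k n "inverse c"] k c A by simp
  finally show ?thesis
    using P_multrow_mat[of k "inverse c" "multrow k c A"] k c A P by simp
qed

lemma P_addrow_rev:
  assumes k: "k < n" and l: "l < n" and kl: "k \<noteq> l" and A: "A \<in> carrier_mat n n"
    and P: "P (addrow a k l A)"
  shows "P A"
proof -
  have "addrow_mat n (- a) k l * addrow a k l A = (addrow_mat n (- a) k l * addrow_mat n a k l) * A"
    using A by (simp add: addrow_mat[OF A l] assoc_mult_mat[of _ n n _ n A n])
  also have "\<dots> = A"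
    using addrow_mat_inv[of k n l "- a"] k l kl A by simp
  finally show ?thesis
    using P_addrow_mat[of k l "addrow a k l A" "- a"] k l kl A P by simp
qed

lemma P_clear_column:
  assumes "A \<in> carrier_mat n n" "det A \<noteq> 0" "unit_columns k A" "k < n" "A $$ (k, k) = 1"
    and next_column: "\<And>B. B \<in> carrier_mat n n \<Longrightarrow> det B \<noteq> 0 \<Longrightarrow> unit_columns (Suc k) B \<Longrightarrow> P B"
  shows "P A"
  using assms(1-5)
proof (induction "card {i. i < n \<and> i \<noteq> k \<and> A $$ (i, k) \<noteq> 0}" arbitrary: A rule: less_induct)
  case less
  show ?case
  proof (cases "\<exists>i<n. i \<noteq> k \<and> A $$ (i, k) \<noteq> 0")
    case False
    then have "unit_columns (Suc k) A"
      using less.prems by (auto simp: unit_columns_def less_Suc_eq)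
    with less.prems show ?thesis
      by (intro next_column)
  next
    case True
    then obtain i where i: "i < n" "i \<noteq> k" "A $$ (i, k) \<noteq> 0"
      by blast
    define B where "B = addrow (- A $$ (i, k)) i k A"
    have B: "B \<in> carrier_mat n n" "det B \<noteq> 0" "unit_columns k B" "B $$ (k, k) = 1"
      using less.prems i by (auto simp: B_def det_addrow unit_columns_def)
    have "{j. j < n \<and> j \<noteq> k \<and> B $$ (j, k) \<noteq> 0}
        = {j. j < n \<and> j \<noteq> k \<and> A $$ (j, k) \<noteq> 0} - {i}"
      using less.prems i by (auto simp: B_def split: if_splits)
    then have "card {j. j < n \<and> j \<noteq> k \<and> B $$ (j, k) \<noteq> 0}
        < card {j. j < n \<and> j \<noteq> k \<and> A $$ (j, k) \<noteq> 0}"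
      unfolding \<open>_ = _ - {i}\<close> using i by (intro card_Diff1_less) auto
    with B have "P B"
      by (intro less.hyps) (use less.prems in auto)
    then show ?thesis
      using P_addrow_rev[of i k A] i less.prems unfolding B_def by blast
  qed
qed

lemma P_normalize_pivot:
  assumes A: "A \<in> carrier_mat n n" and det: "det A \<noteq> 0" and cols: "unit_columns k A" and k: "k < n"
    and normalized: "\<And>B. B \<in> carrier_mat n n \<Longrightarrow> det B \<noteq> 0 \<Longrightarrow> unit_columns k B \<Longrightarrow> B $$ (k, k) = 1 \<Longrightarrow> P B"
  shows "P A"
proof -
  obtain i where i: "k \<le> i" "i < n" "A $$ (i, k) \<noteq> 0"
    using unit_columns_pivot_exists[OF A det cols k] by blast
  define A' where "A' = (if A $$ (k, k) \<noteq> 0 then A else addrow 1 k i A)"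
  have ki: "A $$ (k, k) = 0 \<Longrightarrow> k \<noteq> i"
    using i by auto
  have A': "A' \<in> carrier_mat n n" "det A' \<noteq> 0" "unit_columns k A'" "A' $$ (k, k) \<noteq> 0"
    using A det cols k i ki by (auto simp: A'_def det_addrow unit_columns_def)
  have "P A' \<Longrightarrow> P A"
    using P_addrow_rev[of k i A 1] A i k ki by (cases "A $$ (k, k) = 0") (auto simp: A'_def)
  moreover have "P (multrow k (inverse (A' $$ (k, k))) A')"
    using A' k by (intro normalized) (auto simp: det_multrow unit_columns_def)
  ultimately show ?thesis
    using P_multrow_rev[of k "inverse (A' $$ (k, k))" A'] A' k by simp
qed

lemma P_nonsingular:
  assumes "A \<in> carrier_mat n n" "det A \<noteq> 0"
  shows "P A"
proof -
  have "P A" if "A \<in> carrier_mat n n" "det A \<noteq> 0" "unit_columns k A" "k \<le> n" for k A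
    using that
  proof (induction "n - k" arbitrary: k A)
    case 0
    then show ?case
      using P_one unit_columns_dim_imp_one[of A n] by simp
  next
    case (Suc m)
    then have k: "k < n"
      by simp
    show ?case
    proof (rule P_normalize_pivot[OF Suc.prems(1-3) k])
      fix B :: "'a mat" assume "B \<in> carrier_mat n n" "det B \<noteq> 0" "unit_columns k B" "B $$ (k, k) = 1"
      then show "P B"
      proof (rule P_clear_column[OF _ _ _ k])
        fix C :: "'a mat" assume "C \<in> carrier_mat n n" "det C \<noteq> 0" "unit_columns (Suc k) C"
        with Suc.hyps(1)[of "Suc k" C] Suc.hyps(2) k show "P C"
          by simp
      qed
    qed
  qed
  moreover have "unit_columns 0 A"
    by (simp add: unit_columns_def)
  ultimately show ?thesis
    using assms by blast
qed

end

section \<open>Normal subgroups containing the diagonal automorphisms\<close>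

lemma (in group) normal_mem_if_conj_eq_square:
  assumes N: "N \<lhd> G" and d: "d \<in> N" and e: "e \<in> carrier G" and conj: "d \<otimes> e \<otimes> inv d = e \<otimes> e"
  shows "e \<in> N"
proof -
  have sub: "subgroup N G"
    using N by (rule normal_imp_subgroup)
  have dG: "d \<in> carrier G"
    using d subgroup.subset[OF sub] by blast
  have "e = (d \<otimes> e \<otimes> inv d) \<otimes> inv e"
    using e by (simp add: conj m_assoc)
  also have "\<dots> = d \<otimes> (e \<otimes> inv d \<otimes> inv e)"
    using dG e by (simp add: m_assoc)
  also have "\<dots> \<in> N"
    using d normal.inv_op_closed2[OF N e subgroup.m_inv_closed[OF sub d]]
    by (rule subgroup.m_closed[OF sub])
  finally show ?thesis .
qed

locale GA_normal_subgroup =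
  fixes n :: nat and N :: "(nat \<Rightarrow> 'a::field_char_0 mpoly) set"
  assumes normal: "N \<lhd> GA n"
    and diagonal_in_N: "\<And>D. diagonal n D \<Longrightarrow> D \<in> N"
begin

interpretation GA: group "GA n"
  by (rule group_GA)

lemma one_in_N: "Var \<in> N"
  using subgroup.one_closed[OF normal_imp_subgroup[OF normal]] by simp

lemma pcomp_in_N: "F \<in> N \<Longrightarrow> G \<in> N \<Longrightarrow> pcomp F G \<in> N"
  using subgroup.m_closed[OF normal_imp_subgroup[OF normal]] by simp

lemma diagonal_lin_in_N:
  assumes "M \<in> carrier_mat n n" "\<And>i j. i < n \<Longrightarrow> j < n \<Longrightarrow> i \<noteq> j \<Longrightarrow> M $$ (i, j) = 0"
    and "\<And>i. i < n \<Longrightarrow> M $$ (i, i) \<noteq> 0"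
  shows "lin n M \<in> N"
  using diagonal_lin[OF assms] by (rule diagonal_in_N)

lemma elementary_map_in_N:
  assumes i: "i < n" and g: "vars g \<subseteq> {..<n} - {i}"
  shows "elementary_map i g \<in> N"
proof (rule GA.normal_mem_if_conj_eq_square[OF normal])
  let ?D = "lin n (multrow_mat n i (2 :: 'a))"
  show "?D \<in> N"
    by (rule diagonal_lin_in_N) auto
  show E: "elementary_map i g \<in> carrier (GA n)"
    using elementary_map_in_GA[OF i g] by simp
  have "inv\<^bsub>GA n\<^esub> ?D = lin n (multrow_mat n i (inverse 2))"
    using multrow_mat_inv[OF i, of "2 :: 'a"] by (intro inv_lin(2)) auto
  then have "?D \<otimes>\<^bsub>GA n\<^esub> elementary_map i g \<otimes>\<^bsub>GA n\<^esub> inv\<^bsub>GA n\<^esub> ?D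
      = pcomp (pcomp ?D (elementary_map i g)) (lin n (multrow_mat n i (inverse 2)))"
    by (simp only: mult_GA)
  also have "\<dots> = elementary_map i (Const 2 * g)"
    by (rule conj_elementary_map_multrow[OF i g]) simp
  also have "Const 2 * g = g + g"
  proof -
    have "Const (2 :: 'a) = 1 + 1"
      by (metis Const_1 Const_add one_add_one)
    then show ?thesis
      by (simp add: distrib_right)
  qed
  also have "elementary_map i (g + g) = elementary_map i g \<otimes>\<^bsub>GA n\<^esub> elementary_map i g"
    using g by (simp add: pcomp_elementary_map subset_Diff_insert)
  finally show "?D \<otimes>\<^bsub>GA n\<^esub> elementary_map i g \<otimes>\<^bsub>GA n\<^esub> inv\<^bsub>GA n\<^esub> ?D
      = elementary_map i g \<otimes>\<^bsub>GA n\<^esub> elementary_map i g" .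
qed

lemma translation_in_N: "translation n b \<in> N"
proof (rule GA.normal_mem_if_conj_eq_square[OF normal])
  let ?D = "lin n (2 \<cdot>\<^sub>m 1\<^sub>m n :: 'a mat)"
  show "?D \<in> N"
    by (rule diagonal_lin_in_N) auto
  show "translation n b \<in> carrier (GA n)"
    using translation_in_GA by simp
  have "(2 \<cdot>\<^sub>m 1\<^sub>m n) * (inverse 2 \<cdot>\<^sub>m 1\<^sub>m n) = (2 :: 'a) \<cdot>\<^sub>m (inverse 2 \<cdot>\<^sub>m (1\<^sub>m n * 1\<^sub>m n))"
    by (simp only: mult_smult_assoc_mat[OF one_carrier_mat smult_carrier_mat[OF one_carrier_mat]]
        mult_smult_distrib[OF one_carrier_mat one_carrier_mat])
  also have "\<dots> = 1\<^sub>m n"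
    by (rule eq_matI) auto
  finally have inv_D: "inv\<^bsub>GA n\<^esub> ?D = lin n (inverse 2 \<cdot>\<^sub>m 1\<^sub>m n)"
    by (intro inv_lin(2)) auto
  have "?D \<otimes>\<^bsub>GA n\<^esub> translation n b \<otimes>\<^bsub>GA n\<^esub> inv\<^bsub>GA n\<^esub> ?D
      = pcomp (pcomp ?D (translation n b)) (lin n (inverse 2 \<cdot>\<^sub>m 1\<^sub>m n))"
    by (simp only: mult_GA inv_D)
  also have "\<dots> = translation n (\<lambda>i. 2 * b i)"
    by (rule conj_translation_scalar) simp
  also have "\<dots> = translation n b \<otimes>\<^bsub>GA n\<^esub> translation n b"
    by (simp only: mult_GA pcomp_translation mult_2)
  finally show "?D \<otimes>\<^bsub>GA n\<^esub> translation n b \<otimes>\<^bsub>GA n\<^esub> inv\<^bsub>GA n\<^esub> ?D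
      = translation n b \<otimes>\<^bsub>GA n\<^esub> translation n b" .
qed

lemma lin_in_N:
  assumes "M \<in> carrier_mat n n" "det M \<noteq> 0"
  shows "lin n M \<in> N"
proof (rule row_operation_closed.P_nonsingular[OF _ assms])
  show "row_operation_closed n (\<lambda>M. lin n M \<in> N)"
  proof
    show "lin n (1\<^sub>m n) \<in> N"
      by (simp add: one_in_N)
  next
    fix k and c :: 'a and B :: "'a mat"
    assume "k < n" "c \<noteq> 0" "B \<in> carrier_mat n n" "lin n B \<in> N"
    moreover have "lin n (multrow_mat n k c) \<in> N"
      using \<open>c \<noteq> 0\<close> by (intro diagonal_lin_in_N) auto
    ultimately show "lin n (multrow_mat n k c * B) \<in> N"
      by (simp add: pcomp_lin[symmetric] pcomp_in_N)
  next
    fix k l and a :: 'a and B :: "'a mat"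
    assume kl: "k < n" "l < n" "k \<noteq> l" and "B \<in> carrier_mat n n" "lin n B \<in> N"
    moreover have "vars (Const a * Var l :: 'a mpoly) \<subseteq> {..<n} - {k}"
      using vars_Const_mult[of a "Var l"] kl by auto
    ultimately show "lin n (addrow_mat n a k l * B) \<in> N"
      by (simp add: pcomp_lin[symmetric] lin_addrow_mat pcomp_in_N elementary_map_in_N)
  qed
qed

lemma affine_in_N:
  assumes "affine n G" "G \<in> GA_set n"
  shows "G \<in> N"
proof -
  obtain M b where M: "M \<in> carrier_mat n n" and G: "G = pcomp (translation n b) (lin n M)"
    using affine_eq_pcomp_translation_lin[OF assms(1)] .
  have T: "translation n b \<in> carrier (GA n)"
    using translation_in_GA by simp
  have "lin n M = inv\<^bsub>GA n\<^esub> (translation n b) \<otimes>\<^bsub>GA n\<^esub> G"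
    using GA.l_inv[OF T] by (simp add: G pcomp_assoc[symmetric])
  then have "lin n M \<in> GA_set n"
    using GA.m_closed[OF GA.inv_closed[OF T], of G] assms(2) by simp
  then have "lin n M \<in> N"
    using M by (intro lin_in_N det_nonzero_if_lin_in_GA)
  then show ?thesis
    unfolding G using translation_in_N by (rule pcomp_in_N[rotated])
qed

lemma tame_in_N: "tame n T \<Longrightarrow> T \<in> N"
proof (induction rule: tame.induct)
  case (tame_elementary G)
  then show ?case
    by (auto elim: elementary_eq_elementary_map intro: elementary_map_in_N)
qed (auto intro: affine_in_N pcomp_in_N)

end

theorem mainTheorem2:
  fixes n :: nat and N :: "(nat \<Rightarrow> 'a::field_char_0 mpoly) set"
  assumes "n \<ge> 1"
    and "subgroup N (GA n)"
    and "\<forall>G\<in>carrier (GA n). \<forall>H\<in>N. G \<otimes>\<^bsub>GA n\<^esub> H \<otimes>\<^bsub>GA n\<^esub> inv\<^bsub>GA n\<^esub> G \<in> N"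
    and "\<forall>D. diagonal n D \<longrightarrow> D \<in> N"
  shows "\<forall>T. tame n T \<longrightarrow> T \<in> N"
proof -
  have "N \<lhd> GA n"
    using assms(2,3) group.normal_inv_iff[OF group_GA] by blast
  then interpret GA_normal_subgroup n N
    using assms(4) by (intro GA_normal_subgroup.intro) auto
  show ?thesis
    using tame_in_N by blast
qed

end
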